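(* Let $0<q<1$ and let $n$ and $s_1,\dots,s_n$ be positive integers such that $s_j>1$ for some $j$. Then \[ \sum_{j=1}^n \zeta\big[s_j+1,s_{j+1},\dots,s_n,s_1,\dots,s_{j-1}\big] = \sum_{j=1}^n \sum_{k=0}^{s_j-2}\zeta\big[s_j-k,s_{j+1},\dots,s_n,s_1,\dots,s_{j-1},k+1\big], \] where the inner sum on the right is zero when $s_j=1$.
   Context: Fix $0<q<1$. For real $x$, $[x]_q := (1-q^x)/(1-q)$. For positive integers $t_1,\dots,t_N$ with $t_1>1$, $\zeta[t_1,\dots,t_N] := \sum_{k_1>\cdots>k_N>0}\prod_{j=1}^N q^{(t_j-1)k_j}/[k_j]_q^{t_j}$ (sum over positive integers). *)

theory Defs
  imports "HOL-Analysis.Analysis"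
begin

definition qint :: "real \<Rightarrow> real \<Rightarrow> real" where
  "qint q x = (1 - q powr x) / (1 - q)"

definition qzeta_index :: "nat \<Rightarrow> nat list set" where
  "qzeta_index N = {ks. length ks = N \<and> sorted_wrt (>) ks \<and> (\<forall>k\<in>set ks. k > 0)}"

definition qzeta :: "real \<Rightarrow> nat list \<Rightarrow> real" where
  "qzeta q t = (\<Sum>\<^sub>\<infinity> ks \<in> qzeta_index (length t).
      \<Prod>j<length t. q ^ ((t ! j - 1) * ks ! j) / (qint q (real (ks ! j))) ^ (t ! j))"

end

theory Submission
  imports Defs
begin

(* For t = (t_1, ..., t_n) let Z(t) (qzeta_conn) be the sum over
   k_0 > ... > k_n > 0 of the zeta summand of t at (k_0, ..., k_{n-1}) times the connector
   q^(k_0-k_n) / [k_0-k_n]_q, and let Z'(t) (qzeta_transfer) be the same sum with the weight of k_0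
   cut down to 1/[k_0]_q and the missing factor (q^k_0 / [k_0]_q)^(t_1-1) replaced by
   (q^k_n / [k_n]_q)^(t_1-1).
   A partial-fraction identity for the connector moves these factors one at a time from k_0 to k_n:
     Z'(t) = Z(t) + sum_{k < t_1-1} zeta[t_1-k, t_2, ..., t_n, k+1].
   Summing Z'(t) over k_0 first telescopes instead, and the first entry moves to the end:
     Z'(t) = zeta[t_2+1, t_3, ..., t_n, t_1] + Z(t_2, ..., t_n, t_1).
   Over all cyclic rotations of s the connected sums Z cancel. An entry t_j > 1 makes Z(t) converge. *)

lemma sum_lessThan_Suc_shift_periodic:
  fixes f :: "nat \<Rightarrow> 'a::cancel_comm_monoid_add"
  assumes "f n = f 0"
  shows "(\<Sum>j<n. f (Suc j)) = (\<Sum>j<n. f j)"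
  using sum.lessThan_Suc_shift[of f n] sum.lessThan_Suc[of f n] assms by (simp add: add.commute)

lemma has_sum_sum:
  fixes f :: "'i \<Rightarrow> 'a \<Rightarrow> 'b::topological_comm_monoid_add"
  assumes "finite I" "\<And>i. i \<in> I \<Longrightarrow> (f i has_sum S i) A"
  shows "((\<lambda>x. \<Sum>i\<in>I. f i x) has_sum (\<Sum>i\<in>I. S i)) A"
  using assms by (induction I rule: finite_induct) (simp_all add: has_sum_add)

lemma qint_of_nat: "0 < q \<Longrightarrow> qint q (real k) = (1 - q ^ k) / (1 - q)"
  by (simp add: qint_def powr_realpow)

lemma one_le_qint:
  assumes "0 < q" "q < 1" "0 < k"
  shows "1 \<le> qint q (real k)"
proof -
  have "q ^ k \<le> q" using assms by (intro power_decreasing[of 1, simplified]) auto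
  then show ?thesis using assms by (simp add: qint_of_nat field_simps)
qed

lemma qint_nonneg: "0 < q \<Longrightarrow> q < 1 \<Longrightarrow> 0 \<le> qint q (real k)"
  by (simp add: qint_of_nat power_le_one)

definition qzeta_factor :: "real \<Rightarrow> nat \<Rightarrow> nat \<Rightarrow> real" where
  "qzeta_factor q t k = q ^ ((t - 1) * k) / qint q (real k) ^ t"

definition qconnector :: "real \<Rightarrow> nat \<Rightarrow> nat \<Rightarrow> real" where
  "qconnector q a b = q ^ (a - b) / qint q (real (a - b))"

lemma qzeta_factor_Suc: "qzeta_factor q (Suc t) k = qconnector q k 0 ^ t / qint q (real k)"
  by (simp add: qzeta_factor_def qconnector_def power_divide power_mult mult.commute)

lemma qzeta_factor_nonneg: "0 < q \<Longrightarrow> q < 1 \<Longrightarrow> 0 \<le> qzeta_factor q t k"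
  by (simp add: qzeta_factor_def qint_nonneg)

lemma qconnector_nonneg: "0 < q \<Longrightarrow> q < 1 \<Longrightarrow> 0 \<le> qconnector q a b"
  by (simp add: qconnector_def qint_nonneg)

lemma qzeta_factor_le_1:
  assumes "0 < q" "q < 1" "0 < k"
  shows "qzeta_factor q t k \<le> 1"
proof -
  have "1 \<le> qint q (real k) ^ t" using one_le_qint[OF assms] by (rule one_le_power)
  moreover have "q ^ ((t - 1) * k) \<le> 1" using assms by (simp add: power_le_one)
  ultimately show ?thesis by (simp add: qzeta_factor_def divide_le_eq)
qed

lemma qzeta_factor_le_power:
  assumes "0 < q" "q < 1" "0 < k" "2 \<le> t"
  shows "qzeta_factor q t k \<le> q ^ k"
proof -
  have "1 \<le> qint q (real k) ^ t" using one_le_qint[OF assms(1-3)] by (rule one_le_power)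
  moreover have "q ^ ((t - 1) * k) \<le> q ^ k" using assms by (intro power_decreasing) auto
  moreover have "q ^ k * 1 \<le> q ^ k * qint q (real k) ^ t"
    using calculation(1) assms(1) by (intro mult_left_mono) auto
  ultimately show ?thesis by (simp add: qzeta_factor_def divide_le_eq)
qed

lemma qconnector_le_power:
  assumes "0 < q" "q < 1" "b < a"
  shows "qconnector q a b \<le> q ^ (a - b)"
  using one_le_qint[of q "a - b"] assms by (simp add: qconnector_def divide_le_eq)

lemma qconnector_mult_diff:
  assumes q: "0 < q" "q < 1" and b: "0 < b" "b < a"
  shows "qconnector q a b * (qconnector q b 0 - qconnector q a 0) = qconnector q a 0 / qint q (real b)"
proof -
  obtain d where a: "a = b + d" and "0 < d" using less_imp_add_positive[OF b(2)] by auto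
  define X Y where "X = q ^ b" and "Y = q ^ d"
  have "0 < X" "X < 1" "0 < Y" "Y < 1"
    using q b \<open>0 < d\<close> by (simp_all add: X_def Y_def power_less_one_iff)
  then have "X * Y < 1" using mult_strict_mono[of X 1 Y 1] by simp
  then have nz: "1 - X \<noteq> 0" "1 - Y \<noteq> 0" "1 - X * Y \<noteq> 0" "1 - q \<noteq> 0"
    using \<open>X < 1\<close> \<open>Y < 1\<close> q by auto
  have eqs: "qconnector q a b = Y / ((1 - Y) / (1 - q))" "qconnector q b 0 = X / ((1 - X) / (1 - q))"
    "qconnector q a 0 = X * Y / ((1 - X * Y) / (1 - q))" "qint q (real b) = (1 - X) / (1 - q)"
    using q by (simp_all add: a X_def Y_def qconnector_def qint_of_nat power_add del: of_nat_add)
  show ?thesis unfolding eqs using nz by (simp add: divide_simps) (simp add: algebra_simps)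
qed

lemma one_div_qint:
  assumes "0 < q" "q < 1" "0 < n"
  shows "1 / qint q (real n) = 1 - q + qconnector q n 0"
proof -
  have "q ^ n < 1" using assms by (simp add: power_less_one_iff)
  with assms show ?thesis by (simp add: qconnector_def qint_of_nat divide_simps) (simp add: algebra_simps)
qed

lemma qconnector_div_qint:
  assumes q: "0 < q" "q < 1" and b: "0 < b" "b < a"
  shows "qconnector q a b / qint q (real a) = (qconnector q (a - b) 0 - qconnector q a 0) / qint q (real b)"
proof -
  define \<alpha> \<beta> \<gamma>
    where "\<alpha> = qconnector q a 0" and "\<beta> = qconnector q b 0" and "\<gamma> = qconnector q (a - b) 0"
  have div_qint: "x / qint q (real n) = x * (1 - q + qconnector q n 0)" if "0 < n" for x n
    using one_div_qint[OF q that] by (metis mult.right_neutral times_divide_eq_right)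
  have "qconnector q a b = \<gamma>" by (simp add: \<gamma>_def qconnector_def)
  then have "\<gamma> * (\<beta> - \<alpha>) = \<alpha> * (1 - q + \<beta>)"
    using qconnector_mult_diff[OF q b] div_qint[OF b(1), of \<alpha>] by (simp add: \<alpha>_def \<beta>_def)
  then have "\<gamma> * (1 - q + \<alpha>) = (\<gamma> - \<alpha>) * (1 - q + \<beta>)" by algebra
  with \<open>qconnector q a b = \<gamma>\<close> show ?thesis using b by (simp add: div_qint \<alpha>_def \<beta>_def \<gamma>_def)
qed

lemma qconnector_power_div_qint_expand:
  assumes q: "0 < q" "q < 1" and b: "0 < b" "b < a"
  shows "qconnector q a b * qconnector q b 0 ^ m / qint q (real a)
       = qconnector q a b * qzeta_factor q (Suc m) a
         + (\<Sum>k<m. qzeta_factor q (Suc m - k) a * qzeta_factor q (Suc k) b)"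
proof -
  define \<alpha> \<beta> where "\<alpha> = qconnector q a 0" and "\<beta> = qconnector q b 0"
  have "qint q (real a) \<noteq> 0" using one_le_qint[OF q, of a] b by simp
  have "qconnector q a b * (\<beta> ^ m - \<alpha> ^ m)
      = qconnector q a b * (\<beta> - \<alpha>) * (\<Sum>k<m. \<alpha> ^ (m - Suc k) * \<beta> ^ k)"
    by (simp add: power_diff_sumr2)
  also have "\<dots> = (\<Sum>k<m. \<alpha> * \<alpha> ^ (m - Suc k) * (\<beta> ^ k / qint q (real b)))"
    using qconnector_mult_diff[OF q b] by (simp add: \<alpha>_def \<beta>_def sum_distrib_left mult_ac)
  also have "\<dots> = qint q (real a) * (\<Sum>k<m. qzeta_factor q (Suc m - k) a * qzeta_factor q (Suc k) b)"
    unfolding sum_distrib_left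
  proof (rule sum.cong)
    fix k assume "k \<in> {..<m}"
    then have "Suc m - k = Suc (m - k)" "\<alpha> * \<alpha> ^ (m - Suc k) = \<alpha> ^ (m - k)"
      by (simp_all add: Suc_diff_Suc flip: power_Suc)
    then show "\<alpha> * \<alpha> ^ (m - Suc k) * (\<beta> ^ k / qint q (real b))
        = qint q (real a) * (qzeta_factor q (Suc m - k) a * qzeta_factor q (Suc k) b)"
      using \<open>qint q (real a) \<noteq> 0\<close> by (simp add: qzeta_factor_Suc \<alpha>_def \<beta>_def)
  qed simp
  finally show ?thesis
    using \<open>qint q (real a) \<noteq> 0\<close> by (simp add: qzeta_factor_Suc \<alpha>_def \<beta>_def field_simps)
qed

lemma summable_on_qconnector_zero:
  assumes "0 < q" "q < 1"
  shows "(\<lambda>a. qconnector q a 0) summable_on A"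
proof (rule summable_on_subset_banach)
  have "summable (\<lambda>a. q ^ a)" using assms by (intro summable_geometric) simp
  then have "(\<lambda>a. q ^ a) summable_on UNIV" using assms by (intro summable_nonneg_imp_summable_on) auto
  then show "(\<lambda>a. qconnector q a 0) summable_on UNIV"
  proof (rule summable_on_comparison_test)
    fix a :: nat
    show "qconnector q a 0 \<le> q ^ a"
      using qconnector_le_power[OF assms, of 0 a] by (cases "a = 0") (simp_all add: qconnector_def qint_def)
  qed (rule qconnector_nonneg[OF assms])
qed simp

lemma has_sum_qconnector_div_qint:
  assumes q: "0 < q" "q < 1" and b: "0 < b" "b \<le> m"
  shows "((\<lambda>a. qconnector q a b / qint q (real a))
          has_sum (\<Sum>c<b. qconnector q m c) / qint q (real b)) {m<..}"
proof -
  define e where "e = (\<lambda>a. qconnector q a 0)"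
  have e_has_sum: "(e has_sum infsum e A) A" for A
    using summable_on_qconnector_zero[OF q] by (simp add: e_def summable_iff_has_sum_infsum)
  have shift: "((\<lambda>a. e (a - b)) has_sum infsum e {m - b<..}) {m<..}"
  proof -
    have "bij_betw (\<lambda>a. a - b) {m<..} {m - b<..}"
      by (rule bij_betwI[where g = "\<lambda>a. a + b"]) (use b in auto)
    then show ?thesis using has_sum_reindex_bij_betw[of "\<lambda>a. a - b" "{m<..}" "{m - b<..}" e] e_has_sum
      by simp
  qed
  have "(e has_sum (infsum e {m - b<..} - infsum e {m<..})) ({m - b<..} - {m<..})"
    by (rule has_sum_Diff[OF e_has_sum e_has_sum]) auto
  moreover have "{m - b<..} - {m<..} = {m - b<..m}" by auto
  ultimately have window: "infsum e {m - b<..} - infsum e {m<..} = (\<Sum>a\<in>{m - b<..m}. e a)"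
    by (simp add: has_sum_finite_iff)
  have "((\<lambda>a. - e a) has_sum - infsum e {m<..}) {m<..}"
    using e_has_sum by (simp add: has_sum_uminus)
  from has_sum_divide_const[OF has_sum_add[OF shift this]]
  have "((\<lambda>a. (e (a - b) - e a) / qint q (real b))
      has_sum (\<Sum>a\<in>{m - b<..m}. e a) / qint q (real b)) {m<..}"
    by (simp add: window[symmetric])
  moreover have "(\<Sum>a\<in>{m - b<..m}. e a) = (\<Sum>c<b. qconnector q m c)"
    by (rule sum.reindex_bij_witness[where i = "\<lambda>c. m - c" and j = "\<lambda>a. m - a"])
      (use b in \<open>auto simp: e_def qconnector_def\<close>)
  moreover have "((\<lambda>a. qconnector q a b / qint q (real a)) has_sum S) {m<..}
      \<longleftrightarrow> ((\<lambda>a. (e (a - b) - e a) / qint q (real b)) has_sum S) {m<..}" for S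
    using q b by (intro has_sum_cong) (simp add: qconnector_div_qint e_def)
  ultimately show ?thesis by simp
qed

definition qzeta_summand :: "real \<Rightarrow> nat list \<Rightarrow> nat list \<Rightarrow> real" where
  "qzeta_summand q t ks = (\<Prod>j<length t. qzeta_factor q (t ! j) (ks ! j))"

lemma qzeta_eq_infsum_summand: "qzeta q t = infsum (qzeta_summand q t) (qzeta_index (length t))"
  by (simp add: qzeta_def qzeta_summand_def[abs_def] qzeta_factor_def)

lemma qzeta_summand_Cons: "qzeta_summand q (x # t) (k # ks) = qzeta_factor q x k * qzeta_summand q t ks"
  unfolding qzeta_summand_def by (simp only: length_Cons prod.lessThan_Suc_shift) simp

lemma qzeta_summand_append_right:
  "length t \<le> length ks \<Longrightarrow> qzeta_summand q t (ks @ ks') = qzeta_summand q t ks"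
  by (auto simp: qzeta_summand_def nth_append intro!: prod.cong)

lemma qzeta_summand_snoc:
  "length t < length ks \<Longrightarrow>
    qzeta_summand q (t @ [x]) ks = qzeta_summand q t ks * qzeta_factor q x (ks ! length t)"
  by (auto simp: qzeta_summand_def nth_append intro!: prod.cong)

lemma qzeta_summand_nonneg: "0 < q \<Longrightarrow> q < 1 \<Longrightarrow> 0 \<le> qzeta_summand q t ks"
  by (simp add: qzeta_summand_def qzeta_factor_nonneg prod_nonneg)

lemma Cons_in_qzeta_index_iff:
  "a # c \<in> qzeta_index (Suc n) \<longleftrightarrow> c \<in> qzeta_index n \<and> 0 < a \<and> (\<forall>k\<in>set c. k < a)"
  by (auto simp: qzeta_index_def)

lemma snoc_in_qzeta_index_iff:
  "c @ [b] \<in> qzeta_index (Suc n) \<longleftrightarrow> c \<in> qzeta_index n \<and> 0 < b \<and> (\<forall>k\<in>set c. b < k)"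
  by (auto simp: qzeta_index_def sorted_wrt_append)

lemma qzeta_index_le_hd: "ks \<in> qzeta_index n \<Longrightarrow> k \<in> set ks \<Longrightarrow> k \<le> hd ks"
  by (cases ks) (auto simp: qzeta_index_def)

lemma qzeta_index_last_le: "ks \<in> qzeta_index n \<Longrightarrow> k \<in> set ks \<Longrightarrow> last ks \<le> k"
  by (cases ks rule: rev_cases) (auto simp: qzeta_index_def sorted_wrt_append)

lemma qzeta_index_nth_le_hd: "ks \<in> qzeta_index n \<Longrightarrow> i < n \<Longrightarrow> ks ! i \<le> hd ks"
  using qzeta_index_le_hd[OF _ nth_mem] by (auto simp: qzeta_index_def)

lemma qzeta_index_last_less_hd:
  assumes "ks \<in> qzeta_index n" "1 < n"
  shows "last ks < hd ks"
proof -
  obtain a c where "ks = a # c" "c \<noteq> []"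
    using assms by (cases ks) (auto simp: qzeta_index_def)
  then show ?thesis using assms(1) last_in_set[of c] by (auto simp: qzeta_index_def)
qed

lemma qzeta_index_Cons_bij:
  assumes "0 < n"
  shows "bij_betw (\<lambda>(c, a). a # c) (SIGMA c:qzeta_index n. {hd c<..}) (qzeta_index (Suc n))"
proof (rule bij_betwI[where g = "\<lambda>ks. (tl ks, hd ks)"])
  show "(\<lambda>(c, a). a # c) \<in> (SIGMA c:qzeta_index n. {hd c<..}) \<rightarrow> qzeta_index (Suc n)"
  proof
    fix x assume "x \<in> (SIGMA c:qzeta_index n. {hd c<..})"
    then obtain c a where "x = (c, a)" "c \<in> qzeta_index n" "hd c < a" by auto
    then show "(case x of (c, a) \<Rightarrow> a # c) \<in> qzeta_index (Suc n)"
      using qzeta_index_le_hd by (fastforce simp: Cons_in_qzeta_index_iff)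
  qed
  show "(\<lambda>ks. (tl ks, hd ks)) \<in> qzeta_index (Suc n) \<rightarrow> (SIGMA c:qzeta_index n. {hd c<..})"
  proof
    fix ks assume ks: "ks \<in> qzeta_index (Suc n)"
    then obtain a c where ks_eq: "ks = a # c" by (cases ks) (auto simp: qzeta_index_def)
    moreover have "c \<noteq> []" using ks assms by (auto simp: ks_eq qzeta_index_def)
    ultimately show "(tl ks, hd ks) \<in> (SIGMA c:qzeta_index n. {hd c<..})"
      using ks by (auto simp: Cons_in_qzeta_index_iff neq_Nil_conv)
  qed
qed (auto simp: qzeta_index_def simp flip: length_greater_0_conv)

lemma qzeta_index_snoc_bij:
  assumes "0 < n"
  shows "bij_betw (\<lambda>(c, b). c @ [b]) (SIGMA c:qzeta_index n. {0<..<last c}) (qzeta_index (Suc n))"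
proof (rule bij_betwI[where g = "\<lambda>ks. (butlast ks, last ks)"])
  show "(\<lambda>(c, b). c @ [b]) \<in> (SIGMA c:qzeta_index n. {0<..<last c}) \<rightarrow> qzeta_index (Suc n)"
  proof
    fix x assume "x \<in> (SIGMA c:qzeta_index n. {0<..<last c})"
    then obtain c b where "x = (c, b)" "c \<in> qzeta_index n" "0 < b" "b < last c" by auto
    then show "(case x of (c, b) \<Rightarrow> c @ [b]) \<in> qzeta_index (Suc n)"
      using qzeta_index_last_le by (fastforce simp: snoc_in_qzeta_index_iff)
  qed
  show "(\<lambda>ks. (butlast ks, last ks)) \<in> qzeta_index (Suc n) \<rightarrow> (SIGMA c:qzeta_index n. {0<..<last c})"
  proof
    fix ks assume ks: "ks \<in> qzeta_index (Suc n)"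
    then obtain b c where ks_eq: "ks = c @ [b]" by (cases ks rule: rev_cases) (auto simp: qzeta_index_def)
    moreover have "c \<noteq> []" using ks assms by (auto simp: ks_eq qzeta_index_def)
    ultimately show "(butlast ks, last ks) \<in> (SIGMA c:qzeta_index n. {0<..<last c})"
      using ks by (auto simp: snoc_in_qzeta_index_iff)
  qed
qed (auto simp: qzeta_index_def simp flip: length_greater_0_conv)

lemma summable_on_power_sum_list:
  fixes r :: real
  assumes "0 < r" "r < 1"
  shows "(\<lambda>ks. r ^ sum_list ks) summable_on {ks :: nat list. length ks = N}"
proof (induction N)
  case 0
  have "{ks :: nat list. length ks = 0} = {[]}" by auto
  then show ?case by simp
next
  case (Suc N)
  let ?A = "{ks :: nat list. length ks = N}"
  define S where "S = infsum (\<lambda>ks. r ^ sum_list ks) ?A"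
  have "((\<lambda>ks. r ^ k * r ^ sum_list ks) has_sum r ^ k * S) ?A" for k
    using Suc by (intro has_sum_cmult_right) (simp add: S_def summable_iff_has_sum_infsum)
  moreover have "(\<lambda>k. r ^ k * S) summable_on UNIV"
    using assms by (intro summable_on_cmult_left summable_nonneg_imp_summable_on summable_geometric) auto
  ultimately have "(\<lambda>(k, ks). r ^ k * r ^ sum_list ks) summable_on UNIV \<times> ?A"
    using assms by (intro summable_on_SigmaI[where g = "\<lambda>k. r ^ k * S"]) auto
  moreover have "inj_on (\<lambda>(k, ks). k # ks) (UNIV \<times> ?A)" by (auto simp: inj_on_def)
  ultimately have "(\<lambda>ks. r ^ sum_list ks) summable_on (\<lambda>(k, ks). k # ks) ` (UNIV \<times> ?A)"
    by (subst summable_on_reindex) (simp_all add: o_def case_prod_unfold power_add)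
  moreover have "(\<lambda>(k, ks). k # ks) ` (UNIV \<times> ?A) = {ks. length ks = Suc N}"
    by (auto simp: image_iff length_Suc_conv)
  ultimately show ?case by simp
qed

lemma summable_on_qzeta_index_power_hd:
  fixes q :: real
  assumes q: "0 < q" "q < 1" and "0 < N"
  shows "(\<lambda>ks. q ^ hd ks) summable_on qzeta_index N"
proof -
  \<comment> \<open>As \<open>r ^ N = q\<close>, \<open>q ^ hd ks \<le> r ^ sum_list ks\<close>, whose sum over all lists of length \<open>N\<close>
      is a product of geometric series.\<close>
  define r where "r = root N q"
  have r: "0 < r" "r < 1" and "r ^ N = q" using assms by (auto simp: r_def real_root_lt_1_iff)
  have "(\<lambda>ks. r ^ sum_list ks) summable_on qzeta_index N"
    by (rule summable_on_subset_banach[OF summable_on_power_sum_list[OF r, of N]]) (auto simp: qzeta_index_def)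
  then show ?thesis
  proof (rule summable_on_comparison_test)
    fix ks assume ks: "ks \<in> qzeta_index N"
    then have "sum_list ks \<le> N * hd ks"
      using sum_list_mono[of ks id "\<lambda>_. hd ks"] qzeta_index_le_hd[OF ks]
      by (simp add: qzeta_index_def sum_list_triv)
    then have "r ^ (N * hd ks) \<le> r ^ sum_list ks" using r by (intro power_decreasing) auto
    then show "q ^ hd ks \<le> r ^ sum_list ks" by (simp add: power_mult \<open>r ^ N = q\<close>)
  qed (use q in simp)
qed

lemma qzeta_summand_le_power:
  assumes q: "0 < q" "q < 1" and ks: "ks \<in> qzeta_index N" and "length t \<le> N"
    and i: "i < length t" "2 \<le> t ! i"
  shows "qzeta_summand q t ks \<le> q ^ (ks ! i)"
proof -
  have pos: "0 < ks ! j" if "j < length t" for j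
    using ks that \<open>length t \<le> N\<close> by (auto simp: qzeta_index_def)
  have "qzeta_summand q t ks
      = qzeta_factor q (t ! i) (ks ! i) * (\<Prod>j\<in>{..<length t} - {i}. qzeta_factor q (t ! j) (ks ! j))"
    unfolding qzeta_summand_def using i by (subst prod.remove[of _ i]) auto
  also have "\<dots> \<le> q ^ (ks ! i) * 1"
    using qzeta_factor_le_power[OF q pos i(2)] qzeta_factor_le_1[OF q pos] qzeta_factor_nonneg[OF q] i(1) q
    by (intro mult_mono prod_le_1 prod_nonneg) auto
  finally show ?thesis by simp
qed

lemma summable_on_qzeta_summand:
  assumes q: "0 < q" "q < 1" and "t \<noteq> []" "2 \<le> hd t"
  shows "qzeta_summand q t summable_on qzeta_index (length t)"
proof (rule summable_on_comparison_test[OF summable_on_qzeta_index_power_hd[OF q]])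
  fix ks assume ks: "ks \<in> qzeta_index (length t)"
  then have "hd ks = ks ! 0" using \<open>t \<noteq> []\<close> by (cases ks) (auto simp: qzeta_index_def)
  then show "qzeta_summand q t ks \<le> q ^ hd ks"
    using qzeta_summand_le_power[OF q ks, where i = 0] assms(3,4) by (simp add: hd_conv_nth)
qed (use assms in \<open>simp_all add: qzeta_summand_nonneg\<close>)

definition qzeta_conn_summand :: "real \<Rightarrow> nat list \<Rightarrow> nat list \<Rightarrow> real" where
  "qzeta_conn_summand q t ks = qzeta_summand q t ks * qconnector q (hd ks) (last ks)"

definition qzeta_conn :: "real \<Rightarrow> nat list \<Rightarrow> real" where
  "qzeta_conn q t = infsum (qzeta_conn_summand q t) (qzeta_index (Suc (length t)))"

definition qzeta_transfer_summand :: "real \<Rightarrow> nat list \<Rightarrow> nat list \<Rightarrow> real" where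
  "qzeta_transfer_summand q t ks =
     qzeta_summand q (1 # tl t) ks * qconnector q (hd ks) (last ks) * qconnector q (last ks) 0 ^ (hd t - 1)"

definition qzeta_transfer :: "real \<Rightarrow> nat list \<Rightarrow> real" where
  "qzeta_transfer q t = infsum (qzeta_transfer_summand q t) (qzeta_index (Suc (length t)))"

lemma summable_on_qzeta_conn_summand:
  assumes q: "0 < q" "q < 1" and "\<exists>x\<in>set t. 1 < x"
  shows "qzeta_conn_summand q t summable_on qzeta_index (Suc (length t))"
proof (rule summable_on_comparison_test[OF summable_on_qzeta_index_power_hd[OF q]])
  obtain i where i: "i < length t" "2 \<le> t ! i"
    using assms(3) by (auto simp: in_set_conv_nth)
  fix ks assume ks: "ks \<in> qzeta_index (Suc (length t))"
  have "last ks \<le> ks ! i" "ks ! i \<le> hd ks" "last ks < hd ks"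
    using qzeta_index_last_le[OF ks] qzeta_index_nth_le_hd[OF ks] qzeta_index_last_less_hd[OF ks] ks i
    by (auto simp: qzeta_index_def simp flip: length_greater_0_conv)
  have "q ^ (hd ks - last ks) \<le> q ^ (hd ks - ks ! i)"
    using q \<open>last ks \<le> ks ! i\<close> by (intro power_decreasing) auto
  then have "qconnector q (hd ks) (last ks) \<le> q ^ (hd ks - ks ! i)"
    using qconnector_le_power[OF q \<open>last ks < hd ks\<close>] by simp
  then have "qzeta_summand q t ks * qconnector q (hd ks) (last ks) \<le> q ^ (ks ! i) * q ^ (hd ks - ks ! i)"
    using qzeta_summand_le_power[OF q ks _ i] qzeta_summand_nonneg[OF q] qconnector_nonneg[OF q] q
    by (intro mult_mono) auto
  also have "\<dots> = q ^ hd ks" using \<open>ks ! i \<le> hd ks\<close> by (simp flip: power_add)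
  finally show "qzeta_conn_summand q t ks \<le> q ^ hd ks" unfolding qzeta_conn_summand_def .
qed (use q in \<open>simp_all add: qzeta_conn_summand_def qzeta_summand_nonneg qconnector_nonneg\<close>)

lemma qzeta_transfer_summand_eq:
  assumes q: "0 < q" "q < 1" and t: "t \<noteq> []" "0 < hd t" and ks: "ks \<in> qzeta_index (Suc (length t))"
  shows "qzeta_transfer_summand q t ks
       = qzeta_conn_summand q t ks + (\<Sum>k<hd t - 1. qzeta_summand q ((hd t - k) # tl t @ [k + 1]) ks)"
proof -
  obtain m u where t_eq: "t = Suc m # u" using t by (cases t) (auto simp: gr0_conv_Suc)
  obtain a c where ks_eq: "ks = a # c" and c: "length c = Suc (length u)"
    using ks by (cases ks) (auto simp: qzeta_index_def t_eq)
  define b where "b = last c"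
  have "c \<noteq> []" using c by auto
  then have "0 < b" "b < a" using ks by (auto simp: qzeta_index_def ks_eq b_def)
  have "c ! length u = b" using c \<open>c \<noteq> []\<close> by (simp add: b_def last_conv_nth)
  have "qzeta_transfer_summand q t ks
      = qzeta_summand q u c * (qconnector q a b * qconnector q b 0 ^ m / qint q (real a))"
    using \<open>c \<noteq> []\<close>
    by (simp add: qzeta_transfer_summand_def t_eq ks_eq qzeta_summand_Cons b_def qzeta_factor_Suc[of q 0])
  also have "\<dots> = qzeta_summand q u c * (qconnector q a b * qzeta_factor q (Suc m) a
      + (\<Sum>k<m. qzeta_factor q (Suc m - k) a * qzeta_factor q (Suc k) b))"
    by (simp only: qconnector_power_div_qint_expand[OF q \<open>0 < b\<close> \<open>b < a\<close>])
  also have "\<dots> = qzeta_conn_summand q t ks + (\<Sum>k<hd t - 1. qzeta_summand q ((hd t - k) # tl t @ [k + 1]) ks)"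
    using c \<open>c \<noteq> []\<close> \<open>c ! length u = b\<close>
    by (simp add: qzeta_conn_summand_def t_eq ks_eq qzeta_summand_Cons qzeta_summand_snoc b_def
        sum_distrib_left algebra_simps)
  finally show ?thesis .
qed

lemma qzeta_transfer_eq_conn:
  assumes q: "0 < q" "q < 1" and t: "t \<noteq> []" "0 < hd t" "\<exists>x\<in>set t. 1 < x"
  shows "qzeta_transfer q t = qzeta_conn q t + (\<Sum>k<hd t - 1. qzeta q ((hd t - k) # tl t @ [k + 1]))"
proof -
  let ?I = "qzeta_index (Suc (length t))"
  have "(qzeta_conn_summand q t has_sum qzeta_conn q t) ?I"
    using summable_on_qzeta_conn_summand[OF q t(3)] by (simp add: qzeta_conn_def summable_iff_has_sum_infsum)
  moreover have "((\<lambda>ks. \<Sum>k<hd t - 1. qzeta_summand q ((hd t - k) # tl t @ [k + 1]) ks)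
      has_sum (\<Sum>k<hd t - 1. qzeta q ((hd t - k) # tl t @ [k + 1]))) ?I"
  proof (rule has_sum_sum)
    fix k assume "k \<in> {..<hd t - 1}"
    then have "qzeta_summand q ((hd t - k) # tl t @ [k + 1]) summable_on ?I"
      using summable_on_qzeta_summand[OF q, of "(hd t - k) # tl t @ [k + 1]"] t by simp
    then show "(qzeta_summand q ((hd t - k) # tl t @ [k + 1]) has_sum qzeta q ((hd t - k) # tl t @ [k + 1])) ?I"
      using t by (simp add: qzeta_eq_infsum_summand summable_iff_has_sum_infsum)
  qed simp
  ultimately have "(qzeta_transfer_summand q t
      has_sum qzeta_conn q t + (\<Sum>k<hd t - 1. qzeta q ((hd t - k) # tl t @ [k + 1]))) ?I"
    by (subst has_sum_cong[OF qzeta_transfer_summand_eq[OF q t(1,2)]]) (auto intro: has_sum_add)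
  then show ?thesis by (simp add: qzeta_transfer_def infsumI)
qed

lemma has_sum_qzeta_transfer_summand_Cons:
  assumes q: "0 < q" "q < 1" and t: "t \<noteq> []" "0 < hd t" and c: "c \<in> qzeta_index (length t)"
  shows "((\<lambda>a. qzeta_transfer_summand q t (a # c))
          has_sum qzeta_summand q (rotate1 t) c * (\<Sum>b<last c. qconnector q (hd c) b)) {hd c<..}"
proof -
  obtain m u where t_eq: "t = Suc m # u" using t by (cases t) (auto simp: gr0_conv_Suc)
  have "length c = Suc (length u)" "c \<noteq> []" using c by (auto simp: qzeta_index_def t_eq)
  define b where "b = last c"
  have "0 < b" "b \<le> hd c"
    using c \<open>c \<noteq> []\<close> qzeta_index_le_hd[OF c last_in_set] by (auto simp: qzeta_index_def b_def)
  have "c ! length u = b" using \<open>length c = Suc (length u)\<close> \<open>c \<noteq> []\<close> by (simp add: b_def last_conv_nth)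
  have "qzeta_transfer_summand q t (a # c)
      = qconnector q a b / qint q (real a) * (qzeta_summand q u c * qconnector q b 0 ^ m)" for a
    using \<open>c \<noteq> []\<close>
    by (simp add: qzeta_transfer_summand_def t_eq qzeta_summand_Cons b_def qzeta_factor_Suc[of q 0])
  moreover have "qzeta_summand q (rotate1 t) c * (\<Sum>b<last c. qconnector q (hd c) b)
      = (\<Sum>k<b. qconnector q (hd c) k) / qint q (real b) * (qzeta_summand q u c * qconnector q b 0 ^ m)"
    using \<open>length c = Suc (length u)\<close> \<open>c ! length u = b\<close>
    by (simp add: t_eq qzeta_summand_snoc qzeta_factor_Suc b_def)
  ultimately show ?thesis
    using has_sum_cmult_left[OF has_sum_qconnector_div_qint[OF q \<open>0 < b\<close> \<open>b \<le> hd c\<close>]] by simp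
qed

lemma qzeta_summand_mult_sum_qconnector:
  assumes r: "r \<noteq> []" "0 < hd r" and c: "c \<in> qzeta_index (length r)"
  shows "qzeta_summand q r c * (\<Sum>b<last c. qconnector q (hd c) b)
       = qzeta_summand q ((hd r + 1) # tl r) c + (\<Sum>b\<in>{0<..<last c}. qzeta_conn_summand q r (c @ [b]))"
proof -
  obtain m v where r_eq: "r = Suc m # v" using r by (cases r) (auto simp: gr0_conv_Suc)
  obtain a c' where c_eq: "c = a # c'" using c r by (cases c) (auto simp: qzeta_index_def)
  have "0 < last c" using c last_in_set[of c] by (auto simp: qzeta_index_def c_eq)
  then have "{..<last c} = insert 0 {0<..<last c}" by auto
  moreover have "qzeta_summand q r c * qconnector q (hd c) 0 = qzeta_summand q ((hd r + 1) # tl r) c"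
    by (simp add: r_eq c_eq qzeta_summand_Cons qzeta_factor_Suc)
  moreover have "qzeta_conn_summand q r (c @ [b]) = qzeta_summand q r c * qconnector q (hd c) b" for b
    using c by (simp add: qzeta_conn_summand_def qzeta_summand_append_right qzeta_index_def c_eq
        del: append_Cons)
  ultimately show ?thesis by (simp add: sum_distrib_left distrib_left)
qed

lemma has_sum_qzeta_conn_snoc:
  assumes q: "0 < q" "q < 1" and r: "r \<noteq> []" "\<exists>x\<in>set r. 1 < x"
  shows "((\<lambda>c. \<Sum>b\<in>{0<..<last c}. qzeta_conn_summand q r (c @ [b])) has_sum qzeta_conn q r)
           (qzeta_index (length r))"
proof (rule has_sum_SigmaD)
  have "(qzeta_conn_summand q r has_sum qzeta_conn q r) (qzeta_index (Suc (length r)))"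
    using summable_on_qzeta_conn_summand[OF q r(2)] by (simp add: qzeta_conn_def summable_iff_has_sum_infsum)
  then show "((\<lambda>(c, b). qzeta_conn_summand q r (c @ [b])) has_sum qzeta_conn q r)
      (SIGMA c:qzeta_index (length r). {0<..<last c})"
    using has_sum_reindex_bij_betw[OF qzeta_index_snoc_bij[of "length r"], of "qzeta_conn_summand q r"] r
    by (simp add: case_prod_unfold)
qed simp

lemma qzeta_transfer_eq_rotate1:
  assumes q: "0 < q" "q < 1" and t: "t \<noteq> []" "\<forall>x\<in>set t. 0 < x" "\<exists>x\<in>set t. 1 < x"
  shows "qzeta_transfer q t = qzeta q ((hd (rotate1 t) + 1) # tl (rotate1 t)) + qzeta_conn q (rotate1 t)"
proof -
  let ?r = "rotate1 t" and ?I = "qzeta_index (length t)"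
  let ?L = "qzeta q ((hd ?r + 1) # tl ?r)"
  have r: "?r \<noteq> []" "0 < hd ?r" "\<exists>x\<in>set ?r. 1 < x" "length ?r = length t"
    using t hd_in_set[of ?r] by auto
  define G where "G c = qzeta_summand q ?r c * (\<Sum>b<last c. qconnector q (hd c) b)" for c
  have "(qzeta_summand q ((hd ?r + 1) # tl ?r) has_sum ?L) ?I"
    using summable_on_qzeta_summand[OF q, of "(hd ?r + 1) # tl ?r"] r
    by (simp add: qzeta_eq_infsum_summand summable_iff_has_sum_infsum)
  from has_sum_add[OF this has_sum_qzeta_conn_snoc[OF q r(1,3), unfolded length_rotate1]]
  have G_has_sum: "(G has_sum ?L + qzeta_conn q ?r) ?I"
    by (rule has_sum_cong[THEN iffD1, rotated])
      (use r in \<open>simp add: G_def qzeta_summand_mult_sum_qconnector\<close>)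
  have inner: "((\<lambda>a. qzeta_transfer_summand q t (a # c)) has_sum G c) {hd c<..}" if "c \<in> ?I" for c
    unfolding G_def using has_sum_qzeta_transfer_summand_Cons[OF q t(1) _ that] t by simp
  have "((\<lambda>(c, a). qzeta_transfer_summand q t (a # c)) has_sum ?L + qzeta_conn q ?r)
      (SIGMA c:?I. {hd c<..})"
  proof (rule has_sum_SigmaI[OF _ G_has_sum])
    show "(\<lambda>(c, a). qzeta_transfer_summand q t (a # c)) summable_on (SIGMA c:?I. {hd c<..})"
      using inner G_has_sum q
      by (intro summable_on_SigmaI[where g = G])
        (auto simp: qzeta_transfer_summand_def qzeta_summand_nonneg qconnector_nonneg dest: has_sum_imp_summable)
  qed (use inner in simp)
  then have "(qzeta_transfer_summand q t has_sum ?L + qzeta_conn q ?r) (qzeta_index (Suc (length t)))"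
    using has_sum_reindex_bij_betw[OF qzeta_index_Cons_bij[of "length t"], of "qzeta_transfer_summand q t"] t
    by (simp add: case_prod_unfold)
  then show ?thesis by (simp add: qzeta_transfer_def infsumI)
qed

theorem theorem5p1:
  fixes q :: real and s :: "nat list"
  assumes "0 < q" and "q < 1"
    and "length s > 0"
    and "\<forall>x\<in>set s. x > 0"
    and "\<exists>x\<in>set s. x > 1"
  shows "(\<Sum>j<length s. qzeta q ((s ! j + 1) # tl (rotate j s)))
       = (\<Sum>j<length s. \<Sum>k<s ! j - 1. qzeta q ((s ! j - k) # tl (rotate j s) @ [k + 1]))"
proof -
  let ?n = "length s"
  define L where "L j = qzeta q ((hd (rotate j s) + 1) # tl (rotate j s))" for j
  define R where
    "R j = (\<Sum>k<hd (rotate j s) - 1. qzeta q ((hd (rotate j s) - k) # tl (rotate j s) @ [k + 1]))" for j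
  define U where "U j = qzeta_conn q (rotate j s)" for j
  have rot: "rotate j s \<noteq> []" "\<forall>x\<in>set (rotate j s). 0 < x" "\<exists>x\<in>set (rotate j s). 1 < x" for j
    using assms(3-5) by auto
  have "U j + R j = L (Suc j) + U (Suc j)" for j
    using qzeta_transfer_eq_conn[OF assms(1,2) rot(1) _ rot(3)] qzeta_transfer_eq_rotate1[OF assms(1,2) rot]
      rot(2) hd_in_set[OF rot(1)] by (simp add: L_def R_def U_def)
  then have "(\<Sum>j<?n. U j) + (\<Sum>j<?n. R j) = (\<Sum>j<?n. L (Suc j)) + (\<Sum>j<?n. U (Suc j))"
    by (simp add: sum.distrib [symmetric])
  also have "\<dots> = (\<Sum>j<?n. L j) + (\<Sum>j<?n. U j)"
    using sum_lessThan_Suc_shift_periodic[of L ?n] sum_lessThan_Suc_shift_periodic[of U ?n]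
    by (simp only: L_def U_def rotate_id mod_self rotate0 id_apply)
  finally have "(\<Sum>j<?n. L j) = (\<Sum>j<?n. R j)" by simp
  moreover have "hd (rotate j s) = s ! j" if "j < ?n" for j
    using hd_rotate_conv_nth[of s j] assms(3) that by simp
  ultimately show ?thesis by (simp add: L_def R_def)
qed

end
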